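(* Let $G(\circ)$, $G(\ast)$ be groups on a set $G$ of even size $n$. Then there are at most $h+2\varphi(n/2)$ elements $a\in G$ with $\mathrm{dist}_a<3$, where $\varphi$ is Euler's totient function.
   Context: $\mathrm{dist}_a=|\{b\in G: a\circ b\ne a\ast b\}|$, $H=\{a\in G:\mathrm{dist}_a=0\}$ and $h=|H|$. *)

theory Defs
  imports "HOL-Algebra.Group" "HOL-Number_Theory.Totient"
begin

definition dist_el :: "('a, 'm1) monoid_scheme \<Rightarrow> ('a, 'm2) monoid_scheme \<Rightarrow> 'a \<Rightarrow> nat" where
  "dist_el G1 G2 a = card {b \<in> carrier G1. a \<otimes>\<^bsub>G1\<^esub> b \<noteq> a \<otimes>\<^bsub>G2\<^esub> b}"

text \<open>H = elements with dist = 0.\<close>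
definition agree_set :: "('a, 'm1) monoid_scheme \<Rightarrow> ('a, 'm2) monoid_scheme \<Rightarrow> 'a set" where
  "agree_set G1 G2 = {a \<in> carrier G1. dist_el G1 G2 a = 0}"

end

theory Submission
  imports Defs "HOL-Algebra.Multiplicative_Group"
begin

text \<open>
  Fix \<open>a\<close> and let \<open>f\<close>, \<open>g\<close> be left multiplication by \<open>a\<close> in the two groups. These are
  permutations of \<open>G\<close> all of whose cycles have length \<open>ord a\<close> in the respective group.
  The map \<open>b \<mapsto> g\<^sup>-\<^sup>1 (f b)\<close> permutes the set of points where \<open>f\<close> and \<open>g\<close> differ without
  fixed points, so \<open>dist\<^sub>a \<noteq> 1\<close>, and \<open>dist\<^sub>a = 2\<close> means that \<open>g\<close> is \<open>f\<close> composed with a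
  transposition \<open>(b c)\<close>. Such a composition either merges the two cycles through \<open>b\<close> and \<open>c\<close>
  or splits the one cycle containing both; as all cycles of \<open>f\<close> and of \<open>g\<close> have equal length,
  one of them is a single \<open>n\<close>-cycle and the other consists of two \<open>n/2\<close>-cycles. Hence \<open>a\<close>
  has order \<open>n\<close> in one group and \<open>n/2\<close> in the other. Counting elements of given order in a
  cyclic group bounds these \<open>a\<close> by \<open>\<phi>(n/2)\<close> for each direction when both groups are cyclic,
  and by \<open>\<phi>(n) \<le> 2\<phi>(n/2)\<close> when only one is.
\<close>

definition uniform_period :: "'a set \<Rightarrow> ('a \<Rightarrow> 'a) \<Rightarrow> nat \<Rightarrow> bool" where
  "uniform_period S f m \<longleftrightarrow> (\<forall>x\<in>S. \<forall>i. (f ^^ i) x = x \<longleftrightarrow> m dvd i)"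

lemma funpow_closed: "f ` S \<subseteq> S \<Longrightarrow> x \<in> S \<Longrightarrow> (f ^^ i) x \<in> S"
  by (induction i) auto

lemma funpow_eq_if_avoiding:
  assumes "f ` S \<subseteq> S" "x \<in> S"
    and "\<And>y. y \<in> S \<Longrightarrow> y \<notin> B \<Longrightarrow> g y = f y"
    and "\<And>i. i < t \<Longrightarrow> (f ^^ i) x \<notin> B"
  shows "(g ^^ t) x = (f ^^ t) x"
  using assms(4)
proof (induction t)
  case (Suc t)
  then show ?case using assms(3)[OF funpow_closed[OF assms(1,2)]] by simp
qed simp

lemma uniform_period_funpow_eq_iff:
  assumes "uniform_period S f m" "f ` S \<subseteq> S" "x \<in> S"
  shows "(f ^^ i) x = (f ^^ j) x \<longleftrightarrow> i mod m = j mod m"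
proof -
  have *: "(f ^^ i) x = (f ^^ j) x \<longleftrightarrow> i mod m = j mod m" if "i \<le> j" for i j
  proof -
    have "(f ^^ j) x = (f ^^ (j - i)) ((f ^^ i) x)"
      using that by (simp flip: funpow_add[unfolded comp_def, THEN fun_cong])
    then have "(f ^^ i) x = (f ^^ j) x \<longleftrightarrow> (f ^^ (j - i)) ((f ^^ i) x) = (f ^^ i) x"
      by auto
    also have "\<dots> \<longleftrightarrow> m dvd j - i"
      using assms(1) funpow_closed[OF assms(2,3)] by (simp add: uniform_period_def)
    also have "\<dots> \<longleftrightarrow> i mod m = j mod m"
      using that by (metis mod_eq_dvd_iff_nat)
    finally show ?thesis .
  qed
  show ?thesis
    using *[of i j] *[of j i] by (cases "i \<le> j") auto
qed

lemma uniform_period_funpow_back: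
  assumes "uniform_period S f m" "f ` S \<subseteq> S" "x \<in> S" "0 < m"
  shows "(f ^^ ((m - 1) * i)) ((f ^^ i) x) = x"
proof -
  have "(f ^^ ((m - 1) * i)) ((f ^^ i) x) = (f ^^ ((m - 1) * i + i)) x"
    by (simp add: funpow_add)
  also have "\<dots> = (f ^^ 0) x"
  proof -
    have "(m - 1) * i + i = m * i" using assms(4) by (cases m) auto
    then show ?thesis using uniform_period_funpow_eq_iff[OF assms(1-3), of _ 0] by simp
  qed
  finally show ?thesis by simp
qed

lemma dvd_double_gt_imp_eq:
  fixes k m :: nat
  assumes "k dvd 2 * m" "0 < m" "m < k"
  shows "k = 2 * m"
proof -
  from assms(1) obtain q where q: "2 * m = k * q" by (auto elim: dvdE)
  have "q \<noteq> 0" using q assms(2) by (cases q) auto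
  moreover have "\<not> 2 \<le> q"
  proof
    assume "2 \<le> q"
    then have "k * 2 \<le> k * q" by (rule mult_le_mono2)
    then show False using q assms(3) by linarith
  qed
  ultimately show ?thesis using q by (cases q) auto
qed

lemma uniform_period_walk:
  assumes maps: "f ` S \<subseteq> S" and f: "uniform_period S f m" and S: "b \<in> S" "c \<in> S"
    and agree: "\<And>y. y \<in> S \<Longrightarrow> y \<notin> {b, c} \<Longrightarrow> g y = f y"
    and swap: "g b = f c"
    and avoid: "\<And>i. 0 < i \<Longrightarrow> i < t \<Longrightarrow> (f ^^ i) c \<noteq> b"
    and t: "0 < t" "t \<le> m"
  shows "(g ^^ t) b = (f ^^ t) c"
proof -
  obtain s where s: "t = Suc s" using t(1) by (cases t) auto
  have "(g ^^ s) (f c) = (f ^^ s) (f c)"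
  proof (rule funpow_eq_if_avoiding[OF maps _ agree])
    show "f c \<in> S" using maps S by auto
  next
    fix i assume "i < s"
    then have "Suc i mod m \<noteq> 0 mod m" using s t by simp
    then have "(f ^^ Suc i) c \<noteq> c"
      using uniform_period_funpow_eq_iff[OF f maps S(2), of "Suc i" 0] by simp
    moreover have "(f ^^ Suc i) c \<noteq> b" using avoid[of "Suc i"] \<open>i < s\<close> s by simp
    ultimately show "(f ^^ i) (f c) \<notin> {b, c}" by (simp add: funpow_swap1)
  qed
  then show ?thesis using s swap by (simp add: funpow_Suc_right funpow_swap1)
qed

lemma uniform_period_merge:
  assumes maps: "f ` S \<subseteq> S" and S: "b \<in> S" "c \<in> S"
    and agree: "\<And>y. y \<in> S \<Longrightarrow> y \<notin> {b, c} \<Longrightarrow> g y = f y"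
    and swap: "g b = f c" "g c = f b"
    and f: "uniform_period S f m" "0 < m" and g: "uniform_period S g k"
    and apart: "\<And>i. (f ^^ i) b \<noteq> c"
  shows "k = 2 * m \<and> card S \<le> 2 * m"
proof -
  note f_back = uniform_period_funpow_back[OF f(1) maps _ f(2)]
  have apart': "(f ^^ i) c \<noteq> b" for i
    using f_back[OF S(2), of i] apart by metis
  have agree': "\<And>y. y \<in> S \<Longrightarrow> y \<notin> {c, b} \<Longrightarrow> g y = f y"
    using agree by blast
  have walk_b: "(g ^^ t) b = (f ^^ t) c" if "0 < t" "t \<le> m" for t
    using uniform_period_walk[OF maps f(1) S agree swap(1) apart' that] .
  have walk_c: "(g ^^ t) c = (f ^^ t) b" if "0 < t" "t \<le> m" for t
    using uniform_period_walk[OF maps f(1) S(2,1) agree' swap(2) apart that] .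
  have f_m: "(f ^^ m) x = x" if "x \<in> S" for x
    using f(1) that by (simp add: uniform_period_def)
  have "(g ^^ (m + m)) b = b"
    using walk_b[of m] walk_c[of m] f_m f(2) S by (simp add: funpow_add)
  then have k_dvd: "k dvd 2 * m"
    using g S(1) by (simp add: uniform_period_def mult_2)
  have "m < k"
  proof (rule ccontr)
    assume "\<not> m < k"
    moreover have "0 < k" using k_dvd f(2) by (cases k) auto
    moreover have "(g ^^ k) b = b" using g S(1) by (simp add: uniform_period_def)
    ultimately show False using walk_b[of k] apart' by (metis not_less)
  qed
  with k_dvd f(2) have k: "k = 2 * m" by (rule dvd_double_gt_imp_eq)
  let ?orbit = "\<lambda>x. (\<lambda>i. (f ^^ i) x) ` {..<m}"
  have in_orbit: "(f ^^ i) x \<in> ?orbit x" if "x \<in> S" for x i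
    using uniform_period_funpow_eq_iff[OF f(1) maps that, of i "i mod m"] f(2) by auto
  have cover: "S \<subseteq> ?orbit b \<union> ?orbit c"
  proof
    fix x assume x: "x \<in> S"
    show "x \<in> ?orbit b \<union> ?orbit c"
    proof (rule ccontr)
      assume "x \<notin> ?orbit b \<union> ?orbit c"
      moreover have "x \<in> ?orbit y" if "(f ^^ i) x = y" "y \<in> S" for i y
        using f_back[OF x, of i] in_orbit[OF that(2)] that(1) by metis
      ultimately have "(f ^^ i) x \<notin> {b, c}" for i
        using S by blast
      then have "(g ^^ m) x = (f ^^ m) x"
        using funpow_eq_if_avoiding[OF maps x agree] by blast
      then have "k dvd m"
        using f_m g x by (simp add: uniform_period_def)
      with k f(2) show False by (auto dest: dvd_imp_le)
    qed
  qed
  have "card S \<le> card (?orbit b) + card (?orbit c)"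
    using card_mono[OF _ cover] card_Un_le[of "?orbit b" "?orbit c"] by simp
  also have "\<dots> \<le> m + m"
    by (intro add_mono card_image_le[THEN order_trans]) auto
  finally show ?thesis using k by simp
qed

lemma uniform_period_split:
  assumes maps: "f ` S \<subseteq> S" and S: "b \<in> S" "c \<in> S" "b \<noteq> c"
    and agree: "\<And>y. y \<in> S \<Longrightarrow> y \<notin> {b, c} \<Longrightarrow> g y = f y"
    and swap: "g b = f c"
    and f: "uniform_period S f m" "0 < m"
    and joined: "(f ^^ i) b = c"
  shows "(g ^^ t) b \<noteq> c"
proof -
  note f_eq = uniform_period_funpow_eq_iff[OF f(1) maps S(1)]
  define j where "j = i mod m"
  have c: "c = (f ^^ j) b" using f_eq[of i j] joined by (simp add: j_def)
  have "j \<noteq> 0" using c S(3) by (cases j) auto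
  have "j < m" using f(2) by (simp add: j_def)
  have walk: "(g ^^ s) b = (f ^^ (s + j)) b" if "0 < s" "s \<le> m - j" for s
  proof -
    have "(f ^^ i) c \<noteq> b" if "0 < i" "i < s" for i
    proof -
      have "(i + j) mod m \<noteq> 0 mod m" using that \<open>s \<le> m - j\<close> \<open>j \<noteq> 0\<close> by simp
      then show ?thesis using f_eq[of "i + j" 0] c by (simp add: funpow_add)
    qed
    then have "(g ^^ s) b = (f ^^ s) c"
      using uniform_period_walk[OF maps f(1) S(1,2) agree swap] that by simp
    then show ?thesis using c by (simp add: funpow_add)
  qed
  have "(g ^^ (m - j)) b = b"
    using walk[of "m - j"] \<open>j < m\<close> f_eq[of m 0] by simp
  then have g_t: "(g ^^ t) b = (g ^^ (t mod (m - j))) b"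
    by (simp add: funpow_mod_eq)
  show ?thesis
  proof (cases "t mod (m - j) = 0")
    case True
    then show ?thesis using g_t S(3) by simp
  next
    case False
    have "t mod (m - j) < m - j" using \<open>j < m\<close> by simp
    then have "(g ^^ t) b = (f ^^ (t mod (m - j) + j)) b"
      using g_t walk[of "t mod (m - j)"] False by simp
    moreover have "(t mod (m - j) + j) mod m \<noteq> j mod m"
      using \<open>t mod (m - j) < m - j\<close> False by simp
    ultimately show ?thesis using f_eq c by simp
  qed
qed

lemma uniform_period_transposition:
  assumes maps: "f ` S \<subseteq> S" "g ` S \<subseteq> S" and S: "b \<in> S" "c \<in> S" "b \<noteq> c"
    and agree: "\<And>y. y \<in> S \<Longrightarrow> y \<notin> {b, c} \<Longrightarrow> g y = f y"
    and swap: "g b = f c" "g c = f b"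
    and f: "uniform_period S f m" "0 < m" "m \<le> card S"
    and g: "uniform_period S g k" "0 < k" "k \<le> card S"
  shows "(card S = 2 * m \<and> k = card S) \<or> (card S = 2 * k \<and> m = card S)"
proof (cases "\<exists>i. (f ^^ i) b = c")
  case True
  then have "(g ^^ t) b \<noteq> c" for t
    using uniform_period_split[OF maps(1) S agree swap(1) f(1,2)] by blast
  moreover have "\<And>y. y \<in> S \<Longrightarrow> y \<notin> {b, c} \<Longrightarrow> f y = g y"
    using agree by metis
  ultimately have "m = 2 * k \<and> card S \<le> 2 * k"
    using uniform_period_merge[OF maps(2) S(1,2) _ swap(2)[symmetric] swap(1)[symmetric] g(1,2) f(1)]
    by blast
  then show ?thesis using f(3) by simp
next
  case False
  then have "k = 2 * m \<and> card S \<le> 2 * m"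
    using uniform_period_merge[OF maps(1) S(1,2) agree swap f(1,2) g(1)] by blast
  then show ?thesis using g(3) by simp
qed

lemma (in group) funpow_lmult:
  assumes "a \<in> carrier G" "x \<in> carrier G"
  shows "(((\<otimes>) a) ^^ i) x = a [^] i \<otimes> x"
proof (induction i)
  case (Suc i)
  have "a \<otimes> (a [^] i \<otimes> x) = a [^] Suc i \<otimes> x"
    using assms by (metis m_assoc nat_pow_Suc2 nat_pow_closed)
  with Suc show ?case by simp
qed (use assms in simp)

lemma (in group) uniform_period_lmult:
  "a \<in> carrier G \<Longrightarrow> uniform_period (carrier G) ((\<otimes>) a) (ord a)"
  by (simp add: uniform_period_def funpow_lmult pow_eq_id)

definition disagreement :: "('a, 'm1) monoid_scheme \<Rightarrow> ('a, 'm2) monoid_scheme \<Rightarrow> 'a \<Rightarrow> 'a set" where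
  "disagreement G1 G2 a = {b \<in> carrier G1. a \<otimes>\<^bsub>G1\<^esub> b \<noteq> a \<otimes>\<^bsub>G2\<^esub> b}"

lemma dist_el_eq_card_disagreement: "dist_el G1 G2 a = card (disagreement G1 G2 a)"
  by (simp add: dist_el_def disagreement_def)

lemma disagreement_partner:
  assumes "group G1" "group G2" "carrier G1 = carrier G2"
    and a: "a \<in> carrier G1" and b: "b \<in> disagreement G1 G2 a"
  obtains c where "c \<in> disagreement G1 G2 a" "c \<noteq> b" "a \<otimes>\<^bsub>G2\<^esub> c = a \<otimes>\<^bsub>G1\<^esub> b"
proof
  interpret G1: group G1 by fact
  interpret G2: group G2 by fact
  have b1: "b \<in> carrier G1" using b by (simp add: disagreement_def)
  define c where "c = inv\<^bsub>G2\<^esub> a \<otimes>\<^bsub>G2\<^esub> (a \<otimes>\<^bsub>G1\<^esub> b)"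
  have ab: "a \<otimes>\<^bsub>G1\<^esub> b \<in> carrier G2" using a b1 assms(3) by (metis G1.m_closed)
  have c1: "c \<in> carrier G1" using a ab assms(3) by (simp add: c_def)
  show ac: "a \<otimes>\<^bsub>G2\<^esub> c = a \<otimes>\<^bsub>G1\<^esub> b"
    using a ab assms(3) by (simp add: c_def G2.m_assoc[symmetric])
  show "c \<noteq> b" using ac b by (auto simp: disagreement_def)
  then have "a \<otimes>\<^bsub>G1\<^esub> c \<noteq> a \<otimes>\<^bsub>G1\<^esub> b" using a b1 c1 by simp
  then show "c \<in> disagreement G1 G2 a" using ac c1 by (simp add: disagreement_def)
qed

lemma dist_el_less_3_transposition:
  assumes groups: "group G1" "group G2" "carrier G1 = carrier G2"
    and fin: "finite (carrier G1)" and a: "a \<in> carrier G1"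
    and dist: "0 < dist_el G1 G2 a" "dist_el G1 G2 a < 3"
  obtains b c where "b \<in> carrier G1" "c \<in> carrier G1" "b \<noteq> c"
    and "a \<otimes>\<^bsub>G2\<^esub> b = a \<otimes>\<^bsub>G1\<^esub> c" "a \<otimes>\<^bsub>G2\<^esub> c = a \<otimes>\<^bsub>G1\<^esub> b"
    and "\<And>x. x \<in> carrier G1 \<Longrightarrow> x \<notin> {b, c} \<Longrightarrow> a \<otimes>\<^bsub>G2\<^esub> x = a \<otimes>\<^bsub>G1\<^esub> x"
proof -
  let ?D = "disagreement G1 G2 a"
  have D: "finite ?D" "card ?D < 3" "?D \<subseteq> carrier G1"
    using fin dist(2) by (auto simp: disagreement_def dist_el_eq_card_disagreement)
  obtain b where b: "b \<in> ?D"
    using dist(1) by (auto simp: dist_el_eq_card_disagreement card_gt_0_iff)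
  obtain c where c: "c \<in> ?D" "c \<noteq> b" and ac: "a \<otimes>\<^bsub>G2\<^esub> c = a \<otimes>\<^bsub>G1\<^esub> b"
    using disagreement_partner[OF groups a b] .
  have D_eq: "?D = {b, c}"
    using card_seteq[OF D(1), of "{b, c}"] b c D(2) by simp
  obtain d where "d \<in> ?D" "d \<noteq> c" and ad: "a \<otimes>\<^bsub>G2\<^esub> d = a \<otimes>\<^bsub>G1\<^esub> c"
    using disagreement_partner[OF groups a c(1)] .
  then have "d = b" using D_eq by auto
  show thesis
  proof (rule that)
    show "b \<in> carrier G1" "c \<in> carrier G1" "b \<noteq> c" using b c D(3) by auto
    show "a \<otimes>\<^bsub>G2\<^esub> b = a \<otimes>\<^bsub>G1\<^esub> c" using ad \<open>d = b\<close> by simp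
    show "a \<otimes>\<^bsub>G2\<^esub> c = a \<otimes>\<^bsub>G1\<^esub> b" by (fact ac)
    show "a \<otimes>\<^bsub>G2\<^esub> x = a \<otimes>\<^bsub>G1\<^esub> x" if "x \<in> carrier G1" "x \<notin> {b, c}" for x
    proof -
      have "x \<notin> ?D" using that(2) D_eq by simp
      then show ?thesis using that(1) by (simp add: disagreement_def)
    qed
  qed
qed

lemma dist_el_less_3_ord:
  assumes groups: "group G1" "group G2" "carrier G1 = carrier G2"
    and fin: "finite (carrier G1)" and n: "n = card (carrier G1)" and a: "a \<in> carrier G1"
    and dist: "0 < dist_el G1 G2 a" "dist_el G1 G2 a < 3"
  shows "(group.ord G1 a = n \<and> group.ord G2 a = n div 2)
       \<or> (group.ord G2 a = n \<and> group.ord G1 a = n div 2)"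
proof -
  interpret G1: group G1 by fact
  interpret G2: group G2 by fact
  have a2: "a \<in> carrier G2" using a groups(3) by simp
  have fin2: "finite (carrier G2)" using fin groups(3) by simp
  obtain b c where bc: "b \<in> carrier G1" "c \<in> carrier G1" "b \<noteq> c"
    and swap: "a \<otimes>\<^bsub>G2\<^esub> b = a \<otimes>\<^bsub>G1\<^esub> c" "a \<otimes>\<^bsub>G2\<^esub> c = a \<otimes>\<^bsub>G1\<^esub> b"
    and agree: "\<And>x. x \<in> carrier G1 \<Longrightarrow> x \<notin> {b, c} \<Longrightarrow> a \<otimes>\<^bsub>G2\<^esub> x = a \<otimes>\<^bsub>G1\<^esub> x"
    using dist_el_less_3_transposition[OF groups fin a dist] by blast
  have "(n = 2 * G1.ord a \<and> G2.ord a = n) \<or> (n = 2 * G2.ord a \<and> G1.ord a = n)"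
    unfolding n
  proof (rule uniform_period_transposition[OF _ _ bc agree swap])
    show "(\<otimes>\<^bsub>G1\<^esub>) a ` carrier G1 \<subseteq> carrier G1" using a by auto
    show "(\<otimes>\<^bsub>G2\<^esub>) a ` carrier G1 \<subseteq> carrier G1" using a2 groups(3) by auto
    show "uniform_period (carrier G1) ((\<otimes>\<^bsub>G1\<^esub>) a) (G1.ord a)"
      using G1.uniform_period_lmult[OF a] .
    show "uniform_period (carrier G1) ((\<otimes>\<^bsub>G2\<^esub>) a) (G2.ord a)"
      using G2.uniform_period_lmult[OF a2] groups(3) by simp
    show "0 < G1.ord a" "0 < G2.ord a"
      using G1.ord_ge_1[OF fin a] G2.ord_ge_1[OF fin2 a2] by auto
    show "G1.ord a \<le> card (carrier G1)" "G2.ord a \<le> card (carrier G1)"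
      using G1.ord_le_group_order[OF fin a] G2.ord_le_group_order[OF fin2 a2] groups(3)
      by (simp_all add: order_def)
  qed
  then show ?thesis by (elim disjE conjE) simp_all
qed

lemma (in group) carrier_eq_pow_image:
  assumes fin: "finite (carrier G)" and g: "g \<in> carrier G" "ord g = order G"
  shows "carrier G = (\<lambda>k. g [^] k) ` {..<order G}"
proof (rule card_seteq[symmetric])
  have "0 < order G" using fin by (simp add: order_gt_0_iff_finite)
  then have "inj_on (\<lambda>k. g [^] k) {..<order G}"
    using ord_inj[OF g(1)] g(2) by (simp add: atLeast0AtMost lessThan_Suc_atMost[symmetric])
  then show "card (carrier G) \<le> card ((\<lambda>k. g [^] k) ` {..<order G})"
    by (simp add: card_image order_def)
qed (use fin g(1) in auto)

lemma (in group) card_ord_eq_le_totient: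
  assumes fin: "finite (carrier G)" and g: "g \<in> carrier G" "ord g = order G"
    and d: "d dvd order G"
  shows "card {x \<in> carrier G. ord x = d} \<le> totient d"
proof -
  define q where "q = order G div d"
  have "0 < order G" using fin by (simp add: order_gt_0_iff_finite)
  moreover have "order G = q * d" using d by (simp add: q_def)
  ultimately have "0 < d" "0 < q" by simp_all
  define h where "h = g [^] q"
  have h: "h \<in> carrier G" "ord h = d"
    using g \<open>order G = q * d\<close> \<open>0 < q\<close> ord_pow[OF g(1), of q] by (auto simp: h_def)
  have "{x \<in> carrier G. ord x = d} \<subseteq> (\<lambda>j. h [^] j) ` totatives d"
  proof
    fix x assume "x \<in> {x \<in> carrier G. ord x = d}"
    then have x: "x \<in> carrier G" "ord x = d" by simp_all
    then obtain k where k: "k < order G" "x = g [^] k"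
      using carrier_eq_pow_image[OF fin g] by auto
    have "x [^] d = \<one>" using x pow_ord_eq_1 by blast
    then have "g [^] (k * d) = \<one>" using k g(1) by (simp add: nat_pow_pow)
    then have "q * d dvd k * d" using pow_eq_id[OF g(1)] g(2) \<open>order G = q * d\<close> by simp
    then obtain j where j: "k = q * j" using \<open>0 < d\<close> by (auto elim: dvdE)
    have xj: "x = h [^] j" using k j g(1) by (simp add: h_def nat_pow_pow)
    have "j < d" using k(1) j \<open>order G = q * d\<close> by simp
    show "x \<in> (\<lambda>j. h [^] j) ` totatives d"
    proof (cases "j = 0")
      case True
      then have "d = 1" using x xj by simp
      then have "h = \<one>" using h ord_eq_1 by blast
      with \<open>d = 1\<close> show ?thesis using xj True h by (auto simp: totatives_def intro!: image_eqI[of _ _ 1])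
    next
      case False
      then have "d div gcd d j = d" using xj x ord_pow_gen[OF h(1), of j] h(2) by simp
      then have "coprime j d" using \<open>0 < d\<close> by (simp add: div_eq_dividend_iff coprime_iff_gcd_eq_1 gcd.commute)
      then show ?thesis using xj False \<open>j < d\<close> by (auto simp: totatives_def)
    qed
  qed
  then have "card {x \<in> carrier G. ord x = d} \<le> card ((\<lambda>j. h [^] j) ` totatives d)"
    by (intro card_mono) auto
  also have "\<dots> \<le> totient d" unfolding totient_def by (rule card_image_le) simp
  finally show ?thesis .
qed

lemma (in group) card_ord_eq_order_le_totient:
  assumes "finite (carrier G)"
  shows "card {x \<in> carrier G. ord x = order G} \<le> totient (order G)"
proof (cases "\<exists>g\<in>carrier G. ord g = order G")
  case True
  then obtain g where "g \<in> carrier G" "ord g = order G" by blast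
  then show ?thesis by (rule card_ord_eq_le_totient[OF assms]) simp
next
  case False
  then have empty: "{x \<in> carrier G. ord x = order G} = {}" by blast
  show ?thesis by (simp only: empty card.empty)
qed

definition swapped_orders :: "('a, 'm1) monoid_scheme \<Rightarrow> ('a, 'm2) monoid_scheme \<Rightarrow> nat \<Rightarrow> 'a set" where
  "swapped_orders G1 G2 n = {a \<in> carrier G1. (group.ord G1 a = n \<and> group.ord G2 a = n div 2)
                                            \<or> (group.ord G2 a = n \<and> group.ord G1 a = n div 2)}"

lemma dist_el_less_3_subset:
  assumes "group G1" "group G2" "carrier G1 = carrier G2"
    and "finite (carrier G1)" "n = card (carrier G1)"
  shows "{a \<in> carrier G1. dist_el G1 G2 a < 3} \<subseteq> agree_set G1 G2 \<union> swapped_orders G1 G2 n"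
proof
  fix a assume a: "a \<in> {a \<in> carrier G1. dist_el G1 G2 a < 3}"
  show "a \<in> agree_set G1 G2 \<union> swapped_orders G1 G2 n"
  proof (cases "dist_el G1 G2 a = 0")
    case True
    then show ?thesis using a by (simp add: agree_set_def)
  next
    case False
    then show ?thesis using a dist_el_less_3_ord[OF assms] by (simp add: swapped_orders_def)
  qed
qed

lemma card_swapped_orders_le:
  assumes groups: "group G1" "group G2" "carrier G1 = carrier G2"
    and fin: "finite (carrier G1)" and n: "n = card (carrier G1)" and "even n"
  shows "card (swapped_orders G1 G2 n) \<le> 2 * totient (n div 2)"
proof -
  interpret G1: group G1 by fact
  interpret G2: group G2 by fact
  have fin2: "finite (carrier G2)" using fin groups(3) by simp
  have order: "order G1 = n" "order G2 = n" using n groups(3) by (simp_all add: order_def)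
  have "n div 2 dvd n" using \<open>even n\<close> by auto
  have "totient n = totient (2 * (n div 2))" using \<open>even n\<close> by simp
  also have "\<dots> \<le> 2 * totient (n div 2)" by (simp add: totient_double)
  finally have "totient n \<le> 2 * totient (n div 2)" .
  define E1 where "E1 d = {x \<in> carrier G1. G1.ord x = d}" for d
  define E2 where "E2 d = {x \<in> carrier G2. G2.ord x = d}" for d
  have E_fin: "finite (E1 d)" "finite (E2 d)" for d
    using fin fin2 by (simp_all add: E1_def E2_def)
  have E1_le: "card (E1 d) \<le> totient d" if "E1 n \<noteq> {}" "d dvd n" for d
  proof -
    from that(1) obtain g where "g \<in> E1 n" by (meson ex_in_conv)
    then have "g \<in> carrier G1" "G1.ord g = order G1" using order(1) by (simp_all add: E1_def)
    then show ?thesis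
      unfolding E1_def by (rule G1.card_ord_eq_le_totient[OF fin]) (simp add: order that(2))
  qed
  have E2_le: "card (E2 d) \<le> totient d" if "E2 n \<noteq> {}" "d dvd n" for d
  proof -
    from that(1) obtain g where "g \<in> E2 n" by (meson ex_in_conv)
    then have "g \<in> carrier G2" "G2.ord g = order G2" using order(2) by (simp_all add: E2_def)
    then show ?thesis
      unfolding E2_def by (rule G2.card_ord_eq_le_totient[OF fin2]) (simp add: order that(2))
  qed
  have E1_n: "card (E1 n) \<le> totient n"
    using G1.card_ord_eq_order_le_totient[OF fin] unfolding E1_def order(1) .
  have E2_n: "card (E2 n) \<le> totient n"
    using G2.card_ord_eq_order_le_totient[OF fin2] unfolding E2_def order(2) .
  let ?A = "swapped_orders G1 G2 n"
  consider "E1 n = {}" | "E2 n = {}" | "E1 n \<noteq> {}" "E2 n \<noteq> {}" by blast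
  then show ?thesis
  proof cases
    case 1
    then have "?A \<subseteq> E2 n" using groups(3) unfolding swapped_orders_def E1_def E2_def by blast
    then have "card ?A \<le> totient n" using card_mono[OF E_fin(2)] E2_n by (meson order_trans)
    then show ?thesis using \<open>totient n \<le> 2 * totient (n div 2)\<close> by simp
  next
    case 2
    then have "?A \<subseteq> E1 n" using groups(3) unfolding swapped_orders_def E1_def E2_def by blast
    then have "card ?A \<le> totient n" using card_mono[OF E_fin(1)] E1_n by (meson order_trans)
    then show ?thesis using \<open>totient n \<le> 2 * totient (n div 2)\<close> by simp
  next
    case 3
    have "?A \<subseteq> E2 (n div 2) \<union> E1 (n div 2)" using groups(3) unfolding swapped_orders_def E1_def E2_def by blast
    then have "card ?A \<le> card (E2 (n div 2)) + card (E1 (n div 2))"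
      using card_mono[OF finite_UnI[OF E_fin(2,1)]] card_Un_le by (meson order_trans)
    then show ?thesis
      using E1_le[OF 3(1) \<open>n div 2 dvd n\<close>] E2_le[OF 3(2) \<open>n div 2 dvd n\<close>] by simp
  qed
qed

theorem lemma4p15:
  fixes G1 :: "('a, 'm1) monoid_scheme" and G2 :: "('a, 'm2) monoid_scheme" and n :: nat
  assumes "group G1" and "group G2"
    and "carrier G1 = carrier G2"
    and "finite (carrier G1)"
    and "n = card (carrier G1)"
    and "even n"
  shows "card {a \<in> carrier G1. dist_el G1 G2 a < 3}
           \<le> card (agree_set G1 G2) + 2 * totient (n div 2)"
proof -
  let ?S = "swapped_orders G1 G2 n"
  have "card {a \<in> carrier G1. dist_el G1 G2 a < 3} \<le> card (agree_set G1 G2 \<union> ?S)"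
    using dist_el_less_3_subset[OF assms(1-5)] assms(4)
    by (intro card_mono) (auto simp: agree_set_def swapped_orders_def)
  also have "\<dots> \<le> card (agree_set G1 G2) + card ?S" by (rule card_Un_le)
  also have "\<dots> \<le> card (agree_set G1 G2) + 2 * totient (n div 2)"
    using card_swapped_orders_le[OF assms] by simp
  finally show ?thesis .
qed

end
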